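(* Let $p'$ be a joint distribution of two binary random variables $(D,E)$ with $p'(E=1)>0$ and $p'(E=0)>0$, and let $M',m'$ be real numbers in the feasible region for $p'$, i.e. $\max_{e\in\{0,1\}} p'(D=1\mid E=e)\le M'\le 1$ and $0\le m'\le \min_{e\in\{0,1\}} p'(D=1\mid E=e)$. Then for every $\delta>0$ there exists a joint distribution $p(D,E,U)$, with $D,E$ binary and $U$ categorical (finitely many values), satisfying positivity (i.e. $p(U=u)>0$ implies $p(E=e\mid U=u)>0$ for both $e\in\{0,1\}$), such that, writing $M=\max_{e,u} p(D=1\mid E=e,U=u)$ and $m=\min_{e,u}p(D=1\mid E=e,U=u)$ (over $e\in\{0,1\}$ and $u$ with $p(U=u)>0$): (i) $|M-M'|<\delta$, $|m-m'|<\delta$, and $|p(D=d,E=e)-p'(D=d,E=e)|<\delta$ for all $d,e\in\{0,1\}$; and (ii) simultaneously, $$\bigl|\,p(D_1=1)-\bigl[p(D=1,E=1)+p(E=0)\,m\bigr]\bigr|<\delta \quad\text{and}\quad \bigl|\,p(D_0=1)-\bigl[p(D=1,E=0)+p(E=1)\,M\bigr]\bigr|<\delta,$$ where $p(D_e=1)=\sum_u p(D=1\mid E=e,U=u)\,p(U=u)$ is the counterfactual probability of the outcome under exposure level $e$.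
   Context: Setting: $E$ (exposure) and $D$ (outcome) are binary, $U$ is an unmeasured categorical confounder, and the causal structure is the graph $U\to E$, $U\to D$, $E\to D$, interpreted as a non-parametric structural equation model with independent errors. $D_e$ denotes the counterfactual outcome when the exposure is set to $E=e$; under this model (counterfactual consistency and $D_e\perp E\mid U$) one has $p(D_e=1)=\sum_u p(D=1\mid E=e,U=u)p(U=u)$. The sensitivity parameters are $M=\max_{e,u}p(D=1\mid E=e,U=u)$ and $m=\min_{e,u}p(D=1\mid E=e,U=u)$. For any such model one has the bounds $p(D=1,E=e)+p(E=1-e)\,m\le p(D_e=1)\le p(D=1,E=e)+p(E=1-e)\,M$; the theorem says the lower bound for $p(D_1=1)$ and the upper bound for $p(D_0=1)$ are simultaneously arbitrarily sharp. *)

theory Defs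
  imports "HOL-Probability.Probability"
begin

(* Observed distribution p'(D,E): a pmf on (D,E) :: bool \<times> bool, True = 1. *)

definition obsE :: "(bool \<times> bool) pmf \<Rightarrow> bool \<Rightarrow> real" where
  "obsE q e = pmf q (True, e) + pmf q (False, e)"

definition obsCond :: "(bool \<times> bool) pmf \<Rightarrow> bool \<Rightarrow> real" where
  "obsCond q e = pmf q (True, e) / obsE q e"

(* Full distribution p(D,E,U) :: (bool \<times> bool \<times> nat) pmf, U categorical (finite support). *)

definition pU :: "(bool \<times> bool \<times> nat) pmf \<Rightarrow> nat \<Rightarrow> real" where
  "pU p u = (\<Sum>d\<in>UNIV. \<Sum>e\<in>UNIV. pmf p (d, e, u))"

definition pEU :: "(bool \<times> bool \<times> nat) pmf \<Rightarrow> bool \<Rightarrow> nat \<Rightarrow> real" where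
  "pEU p e u = pmf p (True, e, u) + pmf p (False, e, u)"

definition suppU :: "(bool \<times> bool \<times> nat) pmf \<Rightarrow> nat set" where
  "suppU p = {u. pU p u > 0}"

definition condDEU :: "(bool \<times> bool \<times> nat) pmf \<Rightarrow> bool \<Rightarrow> nat \<Rightarrow> real" where
  "condDEU p e u = pmf p (True, e, u) / pEU p e u"

definition positivity :: "(bool \<times> bool \<times> nat) pmf \<Rightarrow> bool" where
  "positivity p \<longleftrightarrow> (\<forall>u. pU p u > 0 \<longrightarrow> (\<forall>e. pEU p e u > 0))"

definition Msens :: "(bool \<times> bool \<times> nat) pmf \<Rightarrow> real" where
  "Msens p = Max {condDEU p e u | e u. u \<in> suppU p}"

definition msens :: "(bool \<times> bool \<times> nat) pmf \<Rightarrow> real" where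
  "msens p = Min {condDEU p e u | e u. u \<in> suppU p}"

definition pDE :: "(bool \<times> bool \<times> nat) pmf \<Rightarrow> bool \<Rightarrow> bool \<Rightarrow> real" where
  "pDE p d e = (\<Sum>u\<in>suppU p. pmf p (d, e, u))"

definition pE :: "(bool \<times> bool \<times> nat) pmf \<Rightarrow> bool \<Rightarrow> real" where
  "pE p e = pDE p True e + pDE p False e"

definition pCF :: "(bool \<times> bool \<times> nat) pmf \<Rightarrow> bool \<Rightarrow> real" where
  "pCF p e = (\<Sum>u\<in>suppU p. condDEU p e u * pU p u)"

end

theory Submission
  imports Defs
begin

text \<open>
  Let the confounder U \<in> {0, 1} be a noisy copy of the exposure, equal to E with probability
  1 - \<epsilon>. On the typical cells U = E the outcome rates are the observed ones, so p(D, E) moves by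
  O(\<epsilon>) only; the rare cells carry the extreme rates, m for E = 1 and M for E = 0, which makes the
  sensitivity parameters exactly M and m. Then p(D_1 = 1) = m p(U = 0) + p(D = 1 | E = 1) p(U = 1)
  differs from p(D = 1, E = 1) + p(E = 0) m by O(\<epsilon>), since p(U = 0) \<approx> p(E = 0), and symmetrically
  for D_0.
\<close>

locale confounding_table =
  fixes S :: "nat set" and w r :: "bool \<Rightarrow> nat \<Rightarrow> real"
  assumes finite_S: "finite S"
    and weight_pos: "u \<in> S \<Longrightarrow> 0 < w e u"
    and weight_sum: "(\<Sum>u\<in>S. w True u + w False u) = 1"
    and rate_nonneg: "u \<in> S \<Longrightarrow> 0 \<le> r e u"
    and rate_le_1: "u \<in> S \<Longrightarrow> r e u \<le> 1"
begin

definition joint_mass :: "bool \<times> bool \<times> nat \<Rightarrow> real" where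
  "joint_mass = (\<lambda>(d, e, u). if u \<in> S then w e u * (if d then r e u else 1 - r e u) else 0)"

definition joint :: "(bool \<times> bool \<times> nat) pmf" where
  "joint = embed_pmf joint_mass"

lemma joint_mass_nonneg: "0 \<le> joint_mass x"
  using weight_pos rate_nonneg rate_le_1
  by (auto simp: joint_mass_def less_imp_le split: prod.splits)

lemma sum_joint_mass: "(\<Sum>x\<in>UNIV \<times> UNIV \<times> S. joint_mass x) = 1"
proof -
  have "(\<Sum>x\<in>UNIV \<times> UNIV \<times> S. joint_mass x) = (\<Sum>d\<in>UNIV. \<Sum>e\<in>UNIV. \<Sum>u\<in>S. joint_mass (d, e, u))"
    by (simp add: sum.cartesian_product)
  also have "\<dots> = (\<Sum>u\<in>S. w True u + w False u)"
    by (simp add: joint_mass_def UNIV_bool sum.distrib[symmetric] algebra_simps)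
  finally show ?thesis
    using weight_sum by simp
qed

lemma pmf_joint: "pmf joint x = joint_mass x"
  unfolding joint_def
proof (rule pmf_embed_pmf)
  show "0 \<le> joint_mass x" for x
    by (rule joint_mass_nonneg)
  have "(\<integral>\<^sup>+x. ennreal (joint_mass x) \<partial>count_space UNIV) = (\<Sum>x\<in>UNIV \<times> UNIV \<times> S. ennreal (joint_mass x))"
    using finite_S by (intro nn_integral_count_space') (auto simp: joint_mass_def split: if_splits)
  also have "\<dots> = 1"
    using joint_mass_nonneg sum_joint_mass by (simp add: sum_ennreal)
  finally show "(\<integral>\<^sup>+x. ennreal (joint_mass x) \<partial>count_space UNIV) = 1" .
qed

lemma finite_set_pmf_joint: "finite (set_pmf joint)"
proof (rule finite_subset)
  show "set_pmf joint \<subseteq> UNIV \<times> UNIV \<times> S"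
    by (auto simp: set_pmf_eq pmf_joint joint_mass_def split: if_splits)
  show "finite (UNIV \<times> UNIV \<times> S :: (bool \<times> bool \<times> nat) set)"
    using finite_S by simp
qed

lemma pEU_joint: "pEU joint e u = (if u \<in> S then w e u else 0)"
  by (simp add: pEU_def pmf_joint joint_mass_def algebra_simps)

lemma pU_joint: "pU joint u = (if u \<in> S then w True u + w False u else 0)"
  by (simp add: pU_def pmf_joint joint_mass_def UNIV_bool algebra_simps)

lemma suppU_joint: "suppU joint = S"
  using weight_pos by (auto simp: suppU_def pU_joint add_pos_pos split: if_splits)

lemma condDEU_joint: "u \<in> S \<Longrightarrow> condDEU joint e u = r e u"
  using weight_pos[of u e] by (simp add: condDEU_def pEU_joint pmf_joint joint_mass_def)

lemma positivity_joint: "positivity joint"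
  using weight_pos by (simp add: positivity_def pU_joint pEU_joint split: if_splits)

lemma conditional_rates_joint:
  "{condDEU joint e u | e u. u \<in> suppU joint} = {r e u | e u. u \<in> S}"
  unfolding suppU_joint by (metis (no_types, opaque_lifting) condDEU_joint)

lemma Msens_joint: "Msens joint = Max {r e u | e u. u \<in> S}"
  by (simp add: Msens_def conditional_rates_joint)

lemma msens_joint: "msens joint = Min {r e u | e u. u \<in> S}"
  by (simp add: msens_def conditional_rates_joint)

lemma pDE_joint: "pDE joint d e = (\<Sum>u\<in>S. w e u * (if d then r e u else 1 - r e u))"
  by (simp add: pDE_def suppU_joint pmf_joint joint_mass_def)

lemma pCF_joint: "pCF joint e = (\<Sum>u\<in>S. r e u * (w True u + w False u))"
  by (simp add: pCF_def suppU_joint condDEU_joint pU_joint)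

end

lemma abs_scaled_le:
  fixes a x \<epsilon> :: real
  assumes "0 \<le> a" "a \<le> 1" "\<bar>x\<bar> \<le> 1" "0 \<le> \<epsilon>"
  shows "\<bar>a * \<epsilon> * x\<bar> \<le> \<epsilon>"
proof -
  have "\<bar>a * \<epsilon> * x\<bar> = \<epsilon> * (a * \<bar>x\<bar>)"
    using assms by (simp add: abs_mult)
  also have "\<dots> \<le> \<epsilon>"
    using assms by (intro mult_left_le mult_le_one) auto
  finally show ?thesis .
qed

locale noisy_copy_confounder =
  fixes a c :: "bool \<Rightarrow> real" and M m \<epsilon> :: real
  assumes a_pos: "0 < a e"
    and a_sum: "a True + a False = 1"
    and m_le_c: "m \<le> c e" and c_le_M: "c e \<le> M"
    and m_nonneg: "0 \<le> m" and M_le_1: "M \<le> 1"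
    and \<epsilon>_pos: "0 < \<epsilon>" and \<epsilon>_less_1: "\<epsilon> < 1"
begin

definition weight :: "bool \<Rightarrow> nat \<Rightarrow> real" where
  "weight e u = a e * (if u = of_bool e then 1 - \<epsilon> else \<epsilon>)"

definition extreme :: "bool \<Rightarrow> real" where
  "extreme e = (if e then m else M)"

definition rate :: "bool \<Rightarrow> nat \<Rightarrow> real" where
  "rate e u = (if u = of_bool e then c e else extreme e)"

sublocale confounding_table "{0, 1}" weight rate
proof
  show "0 < weight e u" if "u \<in> {0, 1}" for e u
    using a_pos \<epsilon>_pos \<epsilon>_less_1 by (simp add: weight_def)
  show "(\<Sum>u\<in>{0, 1}. weight True u + weight False u) = 1"
    using a_sum by (simp add: weight_def algebra_simps)
  show "0 \<le> rate e u" "rate e u \<le> 1" if "u \<in> {0, 1}" for e u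
    using m_le_c[of e] c_le_M[of e] m_nonneg M_le_1 by (auto simp: rate_def extreme_def)
qed simp

lemma rate_values: "{rate e u | e u. u \<in> {0, 1}} = {c False, c True, m, M}"
  by (auto simp: rate_def extreme_def)

text \<open>
  Lemmas of the interpreted table are unfolded before calling simp: simp rewrites the
  support {0, 1} to {0, Suc 0}, after which they no longer match.
\<close>

lemma Msens_joint_eq: "Msens joint = M"
  unfolding Msens_joint rate_values
  using m_le_c[of True] m_le_c[of False] c_le_M[of True] c_le_M[of False]
  by (simp add: max_def)

lemma msens_joint_eq: "msens joint = m"
  unfolding msens_joint rate_values
  using m_le_c[of True] m_le_c[of False] c_le_M[of True] c_le_M[of False]
  by (simp add: min_def)

lemma pDE_joint_eq:
  "pDE joint d e = a e * ((1 - \<epsilon>) * (if d then c e else 1 - c e)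
                     + \<epsilon> * (if d then extreme e else 1 - extreme e))"
  unfolding pDE_joint by (cases e) (simp_all add: weight_def rate_def algebra_simps)

lemma pE_joint: "pE joint e = a e"
  unfolding pE_def pDE_joint_eq by (simp add: algebra_simps)

lemma a_nonneg: "0 \<le> a e"
  using a_pos[of e] by simp

lemma a_le_1: "a e \<le> 1"
  using a_pos[of True] a_pos[of False] a_sum by (cases e) auto

lemma abs_extreme_diff_le_1: "\<bar>extreme e - c e\<bar> \<le> 1"
  using m_le_c[of e] c_le_M[of e] m_nonneg M_le_1 by (auto simp: extreme_def)

lemma pDE_joint_close: "\<bar>pDE joint d e - a e * (if d then c e else 1 - c e)\<bar> \<le> \<epsilon>"
proof -
  have "pDE joint d e - a e * (if d then c e else 1 - c e)
      = a e * \<epsilon> * (if d then extreme e - c e else c e - extreme e)"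
    unfolding pDE_joint_eq by (simp add: algebra_simps)
  also have "\<bar>\<dots>\<bar> \<le> \<epsilon>"
    using a_nonneg a_le_1 abs_extreme_diff_le_1[of e] \<epsilon>_pos
    by (intro abs_scaled_le) (auto simp: abs_minus_commute)
  finally show ?thesis .
qed

lemma pCF_True_close: "\<bar>pCF joint True - (pDE joint True True + pE joint False * msens joint)\<bar> \<le> \<epsilon>"
proof -
  have "pCF joint True - (pDE joint True True + pE joint False * msens joint)
      = a False * \<epsilon> * (c True - extreme True)"
    unfolding pCF_joint pDE_joint_eq pE_joint msens_joint_eq
    by (simp add: weight_def rate_def extreme_def algebra_simps)
  also have "\<bar>\<dots>\<bar> \<le> \<epsilon>"
    using a_nonneg a_le_1 abs_extreme_diff_le_1[of True] \<epsilon>_pos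
    by (intro abs_scaled_le) (auto simp: abs_minus_commute)
  finally show ?thesis .
qed

lemma pCF_False_close: "\<bar>pCF joint False - (pDE joint True False + pE joint True * Msens joint)\<bar> \<le> \<epsilon>"
proof -
  have "pCF joint False - (pDE joint True False + pE joint True * Msens joint)
      = a True * \<epsilon> * (c False - extreme False)"
    unfolding pCF_joint pDE_joint_eq pE_joint Msens_joint_eq
    by (simp add: weight_def rate_def extreme_def algebra_simps)
  also have "\<bar>\<dots>\<bar> \<le> \<epsilon>"
    using a_nonneg a_le_1 abs_extreme_diff_le_1[of False] \<epsilon>_pos
    by (intro abs_scaled_le) (auto simp: abs_minus_commute)
  finally show ?thesis .
qed

end

lemma obsE_sum: "obsE q True + obsE q False = 1"
proof -
  have "(\<Sum>x\<in>{(True, True), (False, True), (True, False), (False, False)}. pmf q x) = 1"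
    by (rule sum_pmf_eq_1) auto
  then show ?thesis
    by (simp add: obsE_def add.assoc)
qed

lemma pmf_eq_obsE_obsCond:
  assumes "0 < obsE q e"
  shows "pmf q (d, e) = obsE q e * (if d then obsCond q e else 1 - obsCond q e)"
  using assms by (cases d) (simp_all add: obsCond_def right_diff_distrib, simp add: obsE_def)

theorem theorem1:
  fixes q :: "(bool \<times> bool) pmf" and M' m' \<delta> :: real
  assumes "obsE q True > 0" and "obsE q False > 0"
    and "max (obsCond q True) (obsCond q False) \<le> M'" and "M' \<le> 1"
    and "0 \<le> m'" and "m' \<le> min (obsCond q True) (obsCond q False)"
    and "\<delta> > 0"
  shows "\<exists>p :: (bool \<times> bool \<times> nat) pmf.
           finite (set_pmf p) \<and> positivity p \<and>
           \<bar>Msens p - M'\<bar> < \<delta> \<and> \<bar>msens p - m'\<bar> < \<delta> \<and>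
           (\<forall>d e. \<bar>pDE p d e - pmf q (d, e)\<bar> < \<delta>) \<and>
           \<bar>pCF p True - (pDE p True True + pE p False * msens p)\<bar> < \<delta> \<and>
           \<bar>pCF p False - (pDE p True False + pE p True * Msens p)\<bar> < \<delta>"
proof -
  define \<epsilon> :: real where "\<epsilon> = min (1/2) (\<delta>/2)"
  have \<epsilon>: "0 < \<epsilon>" "\<epsilon> < 1" "\<epsilon> < \<delta>"
    using \<open>\<delta> > 0\<close> by (auto simp: \<epsilon>_def)
  have obsE_pos: "0 < obsE q e" for e
    using assms(1,2) by (cases e) auto
  have obsCond_range: "m' \<le> obsCond q e" "obsCond q e \<le> M'" for e
    using assms(3,6) by (cases e; simp)+
  interpret noisy_copy_confounder "obsE q" "obsCond q" M' m' \<epsilon>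
    using obsE_pos obsE_sum obsCond_range assms(4,5) \<epsilon> by unfold_locales auto
  have "\<bar>pDE joint d e - pmf q (d, e)\<bar> < \<delta>" for d e
    using pDE_joint_close[of d e] \<epsilon> by (simp add: pmf_eq_obsE_obsCond[OF obsE_pos])
  then show ?thesis
    using finite_set_pmf_joint positivity_joint Msens_joint_eq msens_joint_eq
      pCF_True_close pCF_False_close \<epsilon> \<open>\<delta> > 0\<close>
    by (intro exI[of _ joint]) simp
qed

end
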